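(* For all $M,N\in\Lambda^{001}$, if $M\longrightarrow_\beta^* N$ then $\mathcal T(M)\mathrel{\widetilde{\longrightarrow}_r^*}\mathcal T(N)$.
   Context: Fix a set $\mathcal V$ of variables. A 001-infinitary λ-term is a possibly infinite tree built from variables $x\in\mathcal V$, abstractions $\lambda x.M$ and applications $(M)N$ ($N$ the argument), such that every infinite branch enters infinitely often the argument position of an application node; $\Lambda^{001}$ denotes the set of such terms, up to α-equivalence, with fresh variables always available. $M[N/x]$ is capture-avoiding substitution (defined corecursively). One-step β-reduction $\longrightarrow_\beta$ is the contextual closure (under abstractions and on both sides of applications, each step with a finite derivation) of $(\lambda x.M)N\longrightarrow_\beta M[N/x]$; $\longrightarrow_\beta^*$ is its reflexive-transitive closure. Resource terms: $s::=x\mid\lambda x.s\mid\langle s\rangle\bar t$, $\bar t=[t_1,\dots,t_n]$ a finite multiset of resource terms. Finite sums are finite sets of resource terms written additively ($0$ empty), constructors extended by linearity. Resource substitution $s\langle\bar t/x\rangle$ is the sum over $\sigma\in\mathfrak S_n$ of the terms obtained by substituting $t_{\sigma(i)}$ for the $i$-th free occurrence of $x$ in $s$, if $x$ has exactly $n$ free occurrences in $s$, and $0$ otherwise. Simple resource reduction $\longmapsto_r$ is the least relation from terms (resp. monomials) to finite sums containing $\langle\lambda x.s\rangle\bar t\longmapsto_r s\langle\bar t/x\rangle$ and closed under abstraction, the function and argument positions of application, and elements of monomials ($s\longmapsto_r S\Rightarrow s\cdot\bar t\longmapsto_r S\cdot\bar t$). On finite sums, $\sum_{i=0}^n s_i\longrightarrow_r\sum_{i=0}^n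 T_i$ whenever $s_0\longmapsto_r T_0$ and for $1\le i\le n$ either $s_i\longmapsto_r T_i$ or $T_i=s_i$; $\longrightarrow_r^*$ is the reflexive-transitive closure. For possibly infinite sets $\mathcal S,\mathcal S'$ of resource terms, $\mathcal S\mathrel{\widetilde{\longrightarrow}_r^*}\mathcal S'$ means: there exist an index set $I$, resource terms $s_i$ and finite sums $S'_i$ ($i\in I$) with $\mathcal S=\{s_i : i\in I\}$, $\mathcal S'=\bigcup_{i\in I}S'_i$ and $s_i\longrightarrow_r^* S'_i$ for all $i$. Taylor approximation $\ltimes$ is defined inductively by $x\ltimes x$; $s\ltimes M\Rightarrow\lambda x.s\ltimes\lambda x.M$; ($s\ltimes M$ and $t_i\ltimes N$ for all $i$) $\Rightarrow\langle s\rangle[t_1,\dots,t_n]\ltimes(M)N$; $\mathcal T(M)=\{s : s\ltimes M\}$. *)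

theory Defs
  imports Main "HOL-Library.Multiset"
begin

codatatype trm = Var nat | Lam trm | App trm trm

primcorec lift :: "nat \<Rightarrow> trm \<Rightarrow> trm" where
  "lift c M = (case M of
      Var i \<Rightarrow> Var (if i < c then i else Suc i)
    | Lam P \<Rightarrow> Lam (lift (Suc c) P)
    | App P Q \<Rightarrow> App (lift c P) (lift c Q))"

primcorec subst :: "nat \<Rightarrow> trm \<Rightarrow> trm \<Rightarrow> trm" where
  "subst k N M = (case M of
      Var i \<Rightarrow> (if i = k then (lift 0 ^^ k) N else Var (if k < i then i - 1 else i))
    | Lam P \<Rightarrow> Lam (subst (Suc k) N P)
    | App P Q \<Rightarrow> App (subst k N P) (subst k N Q))"

datatype dir = DBody | DFun | DArg

fun at_pos :: "trm \<Rightarrow> dir list \<Rightarrow> trm option" where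
  "at_pos M [] = Some M"
| "at_pos M (d # ds) = (case (M, d) of
      (Lam P, DBody) \<Rightarrow> at_pos P ds
    | (App P Q, DFun) \<Rightarrow> at_pos P ds
    | (App P Q, DArg) \<Rightarrow> at_pos Q ds
    | _ \<Rightarrow> None)"

definition is_branch :: "trm \<Rightarrow> (nat \<Rightarrow> dir) \<Rightarrow> bool" where
  "is_branch M f \<longleftrightarrow> (\<forall>n. at_pos M (map f [0..<n]) \<noteq> None)"

definition lam001 :: "trm \<Rightarrow> bool" where
  "lam001 M \<longleftrightarrow> (\<forall>f. is_branch M f \<longrightarrow> (\<exists>\<^sub>\<infinity>n. f n = DArg))"

inductive beta :: "trm \<Rightarrow> trm \<Rightarrow> bool" where
  beta_redex: "beta (App (Lam M) N) (subst 0 N M)"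
| beta_lam: "beta M M' \<Longrightarrow> beta (Lam M) (Lam M')"
| beta_fun: "beta M M' \<Longrightarrow> beta (App M N) (App M' N)"
| beta_arg: "beta N N' \<Longrightarrow> beta (App M N) (App M N')"

datatype rtrm = RVar nat | RLam rtrm | RApp rtrm "rtrm multiset"

primrec rlift :: "rtrm \<Rightarrow> nat \<Rightarrow> rtrm" where
  "rlift (RVar i) c = RVar (if i < c then i else Suc i)"
| "rlift (RLam s) c = RLam (rlift s (Suc c))"
| "rlift (RApp s ts) c = RApp (rlift s c) (image_mset (\<lambda>t. rlift t c) ts)"

text \<open>rsub k ts s s': s' is obtained from s by substituting the elements of the bag ts
  bijectively for the free occurrences of index k (one element per occurrence).
  The set of all such s' is the resource substitution; it is empty when the number
  of occurrences differs from the size of ts.\<close>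
inductive rsub :: "nat \<Rightarrow> rtrm multiset \<Rightarrow> rtrm \<Rightarrow> rtrm \<Rightarrow> bool"
  and rsubs :: "nat \<Rightarrow> rtrm multiset \<Rightarrow> rtrm multiset \<Rightarrow> rtrm multiset \<Rightarrow> bool" where
  rsub_hit: "rsub k {#t#} (RVar k) (((\<lambda>u. rlift u 0) ^^ k) t)"
| rsub_miss: "i \<noteq> k \<Longrightarrow> rsub k {#} (RVar i) (RVar (if k < i then i - 1 else i))"
| rsub_lam: "rsub (Suc k) ts s s' \<Longrightarrow> rsub k ts (RLam s) (RLam s')"
| rsub_app: "rsub k ts0 s s' \<Longrightarrow> rsubs k ts1 us us' \<Longrightarrow> rsub k (ts0 + ts1) (RApp s us) (RApp s' us')"
| rsubs_empty: "rsubs k {#} {#} {#}"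
| rsubs_add: "rsub k ts0 u u' \<Longrightarrow> rsubs k ts1 us us' \<Longrightarrow>
     rsubs k (ts0 + ts1) (add_mset u us) (add_mset u' us')"

definition rsubst :: "rtrm \<Rightarrow> rtrm multiset \<Rightarrow> rtrm set" where
  "rsubst s ts = {s'. rsub 0 ts s s'}"

text \<open>Simple resource reduction (terms resp. monomials to finite sums = finite sets).\<close>
inductive rred :: "rtrm \<Rightarrow> rtrm set \<Rightarrow> bool"
  and rredm :: "rtrm multiset \<Rightarrow> rtrm multiset set \<Rightarrow> bool" where
  rred_redex: "rred (RApp (RLam s) ts) (rsubst s ts)"
| rred_lam: "rred s S \<Longrightarrow> rred (RLam s) (RLam ` S)"
| rred_fun: "rred s S \<Longrightarrow> rred (RApp s ts) ((\<lambda>s'. RApp s' ts) ` S)"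
| rred_arg: "rredm ts TS \<Longrightarrow> rred (RApp s ts) ((\<lambda>ts'. RApp s ts') ` TS)"
| rredm_elem: "rred s S \<Longrightarrow> rredm (add_mset s ts) ((\<lambda>s'. add_mset s' ts) ` S)"

text \<open>Reduction of finite sums: sum_{i=0}^n s_i --> sum_{i=0}^n T_i, with s_0 |-> T_0 and
  each other s_i either reducing or kept.\<close>
definition sred :: "rtrm set \<Rightarrow> rtrm set \<Rightarrow> bool" where
  "sred S S' \<longleftrightarrow> (\<exists>s0 T0 ps. rred s0 T0 \<and>
      (\<forall>(s, T) \<in> set ps. rred s T \<or> T = {s}) \<and>
      S = insert s0 (fst ` set ps) \<and> S' = T0 \<union> \<Union> (snd ` set ps))"

abbreviation sred_star :: "rtrm set \<Rightarrow> rtrm set \<Rightarrow> bool" where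
  "sred_star \<equiv> sred\<^sup>*\<^sup>*"

text \<open>Extension to possibly infinite sets. A family (s_i, S'_i)_{i in I} is represented
  by the set of its pairs (this loses nothing, as only images and unions matter).\<close>
definition sred_tilde :: "rtrm set \<Rightarrow> rtrm set \<Rightarrow> bool" where
  "sred_tilde \<SS> \<SS>' \<longleftrightarrow> (\<exists>I :: (rtrm \<times> rtrm set) set.
      \<SS> = fst ` I \<and> \<SS>' = \<Union> (snd ` I) \<and>
      (\<forall>(s, S') \<in> I. finite S' \<and> sred_star {s} S'))"

inductive taylor :: "rtrm \<Rightarrow> trm \<Rightarrow> bool" where
  taylor_var: "taylor (RVar x) (Var x)"
| taylor_lam: "taylor s M \<Longrightarrow> taylor (RLam s) (Lam M)"
| taylor_app: "taylor s M \<Longrightarrow> (\<forall>t\<in>#ts. taylor t N) \<Longrightarrow> taylor (RApp s ts) (App M N)"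

definition Taylor :: "trm \<Rightarrow> rtrm set" where
  "Taylor M = {s. taylor s M}"

end

theory Submission
  imports Defs
begin

text \<open>A redex approximant \<open>\<langle>\<lambda>x.s\<rangle>t\<close> reduces in one resource step to \<open>s\<langle>t/x\<rangle>\<close>, and
  since Taylor approximation commutes with substitution these sums cover \<open>\<T>(M[N/x])\<close>
  exactly; so every \<beta>-step is simulated on Taylor supports. The simulation passes under
  contexts because \<open>\<T>\<close> is compositional, bags being treated one element at a time.
  It composes along \<open>\<longrightarrow>\<^sub>\<beta>\<^sup>*\<close> because the reductions of the distinct terms of a finite sum
  can be run side by side: a term of a sum may be reduced while a copy of it is kept.\<close>

subsection \<open>Taylor support, lifting and substitution\<close>

lemma lift_simps [simp]:
  "lift c (Var i) = Var (if i < c then i else Suc i)"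
  "lift c (Lam P) = Lam (lift (Suc c) P)"
  "lift c (App P Q) = App (lift c P) (lift c Q)"
  by (subst lift.code; simp)+

lemma subst_simps [simp]:
  "subst k N (Var i) = (if i = k then (lift 0 ^^ k) N else Var (if k < i then i - 1 else i))"
  "subst k N (Lam P) = Lam (subst (Suc k) N P)"
  "subst k N (App P Q) = App (subst k N P) (subst k N Q)"
  by (subst subst.code; simp)+

lemma set_mset_subset_imageE:
  assumes "set_mset M \<subseteq> f ` A"
  obtains N where "set_mset N \<subseteq> A" and "M = image_mset f N"
  using assms
proof (induction M arbitrary: thesis)
  case empty
  then show ?case by (metis empty_subsetI image_mset_empty set_mset_empty)
next
  case (add x M)
  then obtain N where "set_mset N \<subseteq> A" "M = image_mset f N" by auto
  moreover obtain a where "a \<in> A" "x = f a" using add.prems(2) by auto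
  ultimately show ?case by (intro add.prems(1)[of "add_mset a N"]) auto
qed

lemma Taylor_Var [simp]: "Taylor (Var i) = {RVar i}"
  by (auto simp: Taylor_def elim: taylor.cases intro: taylor.intros)

lemma Taylor_Lam [simp]: "Taylor (Lam M) = RLam ` Taylor M"
  by (auto simp: Taylor_def elim: taylor.cases intro: taylor.intros)

lemma Taylor_App [simp]:
  "Taylor (App M N) = {RApp s ts | s ts. s \<in> Taylor M \<and> set_mset ts \<subseteq> Taylor N}"
proof -
  have "taylor u (App M N) \<longleftrightarrow> (\<exists>s ts. u = RApp s ts \<and> taylor s M \<and> (\<forall>t\<in>#ts. taylor t N))" for u
    by (blast elim: taylor.cases intro: taylor.intros)
  then show ?thesis by (auto simp: Taylor_def)
qed

lemma RVar_in_Taylor [simp]: "RVar i \<in> Taylor M \<longleftrightarrow> M = Var i"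
  by (cases M) auto

lemma RLam_in_Taylor [simp]: "RLam s \<in> Taylor M \<longleftrightarrow> (\<exists>P. M = Lam P \<and> s \<in> Taylor P)"
  by (cases M) auto

lemma RApp_in_Taylor [simp]:
  "RApp s ts \<in> Taylor M \<longleftrightarrow> (\<exists>P Q. M = App P Q \<and> s \<in> Taylor P \<and> set_mset ts \<subseteq> Taylor Q)"
  by (cases M) auto

lemma Taylor_lift: "Taylor (lift c M) = (\<lambda>s. rlift s c) ` Taylor M"
proof
  show "(\<lambda>s. rlift s c) ` Taylor M \<subseteq> Taylor (lift c M)"
  proof -
    have "taylor (rlift s c) (lift c M)" if "taylor s M" for s
      using that by (induction arbitrary: c) (auto intro!: taylor.intros)
    then show ?thesis by (auto simp: Taylor_def)
  qed
  show "Taylor (lift c M) \<subseteq> (\<lambda>s. rlift s c) ` Taylor M"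
  proof
    fix t assume "t \<in> Taylor (lift c M)"
    then show "t \<in> (\<lambda>s. rlift s c) ` Taylor M"
    proof (induction t arbitrary: c M)
      case (RVar x)
      then show ?case by (cases M) (auto split: if_splits intro!: image_eqI[of _ _ "RVar _"])
    next
      case (RLam t)
      then show ?case by (cases M) (fastforce simp: image_iff)+
    next
      case (RApp t us)
      then obtain P Q where M: "M = App P Q" by (cases M) auto
      with RApp.prems obtain s where "s \<in> Taylor P" "t = rlift s c"
        using RApp.IH(1) by fastforce
      moreover have "set_mset us \<subseteq> (\<lambda>s. rlift s c) ` Taylor Q"
        using RApp.prems RApp.IH(2) M by auto
      then obtain ss where "set_mset ss \<subseteq> Taylor Q" "us = image_mset (\<lambda>s. rlift s c) ss"
        by (rule set_mset_subset_imageE)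
      ultimately show ?case using M by (auto intro!: image_eqI[of _ _ "RApp s ss"])
    qed
  qed
qed

lemma Taylor_lift_pow: "Taylor ((lift 0 ^^ k) M) = ((\<lambda>s. rlift s 0) ^^ k) ` Taylor M"
  by (induction k) (simp_all add: Taylor_lift image_comp)

lemma Taylor_substI:
  shows "rsub k ts s s' \<Longrightarrow> s \<in> Taylor M \<Longrightarrow> set_mset ts \<subseteq> Taylor N \<Longrightarrow>
      s' \<in> Taylor (subst k N M)"
    and "rsubs k ts us us' \<Longrightarrow> set_mset us \<subseteq> Taylor M \<Longrightarrow> set_mset ts \<subseteq> Taylor N \<Longrightarrow>
      set_mset us' \<subseteq> Taylor (subst k N M)"
proof (induction arbitrary: M and M rule: rsub_rsubs.inducts)
  case (rsub_hit k t)
  then show ?case by (simp add: Taylor_lift_pow)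
next
  case (rsub_app k ts0 s s' ts1 us us')
  then show ?case by fastforce
qed auto

lemma rsubs_of_elements:
  assumes "\<forall>u\<in>#us. \<exists>s ts. s \<in> Taylor M \<and> set_mset ts \<subseteq> Taylor N \<and> rsub k ts s u"
  shows "\<exists>ss ts. set_mset ss \<subseteq> Taylor M \<and> set_mset ts \<subseteq> Taylor N \<and> rsubs k ts ss us"
  using assms
proof (induction us)
  case empty
  show ?case by (auto intro!: exI[of _ "{#}"] rsubs_empty)
next
  case (add u us)
  then obtain ss ts where "set_mset ss \<subseteq> Taylor M" "set_mset ts \<subseteq> Taylor N" "rsubs k ts ss us"
    by auto
  moreover obtain s ts' where "s \<in> Taylor M" "set_mset ts' \<subseteq> Taylor N" "rsub k ts' s u"
    using add.prems by auto
  ultimately show ?case by (intro exI[of _ "add_mset s ss"] exI[of _ "ts' + ts"]) (auto intro: rsubs_add)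
qed

lemma Taylor_subst_VarD:
  "t \<in> Taylor (subst k N (Var k)) \<Longrightarrow>
    \<exists>s ts. s \<in> Taylor (Var k) \<and> set_mset ts \<subseteq> Taylor N \<and> rsub k ts s t"
proof -
  assume "t \<in> Taylor (subst k N (Var k))"
  then obtain u where "u \<in> Taylor N" "t = ((\<lambda>s. rlift s 0) ^^ k) u"
    by (auto simp: Taylor_lift_pow simp del: RVar_in_Taylor RLam_in_Taylor RApp_in_Taylor)
  then show ?thesis by (intro exI[of _ "RVar k"] exI[of _ "{#u#}"]) (auto intro: rsub_hit)
qed

lemma Taylor_substD:
  "t \<in> Taylor (subst k N M) \<Longrightarrow> \<exists>s ts. s \<in> Taylor M \<and> set_mset ts \<subseteq> Taylor N \<and> rsub k ts s t"
proof (induction t arbitrary: k M)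
  case (RVar j)
  show ?case
  proof (cases "M = Var k")
    case False
    with RVar obtain i where "M = Var i" "i \<noteq> k" "RVar j = RVar (if k < i then i - 1 else i)"
      by (cases M) auto
    then show ?thesis using rsub_miss[of i k] by (intro exI[of _ "RVar i"] exI[of _ "{#}"]) auto
  qed (use RVar in \<open>blast intro: Taylor_subst_VarD\<close>)
next
  case (RLam t)
  show ?case
  proof (cases "M = Var k")
    case False
    then show ?thesis
    proof (cases M)
      case (Lam P)
      with RLam.prems obtain s ts where "s \<in> Taylor P" "set_mset ts \<subseteq> Taylor N" "rsub (Suc k) ts s t"
        using RLam.IH by force
      then show ?thesis using Lam by (intro exI[of _ "RLam s"] exI[of _ ts]) (auto intro: rsub_lam)
    qed (use RLam.prems in auto)
  qed (use RLam.prems in \<open>blast intro: Taylor_subst_VarD\<close>)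
next
  case (RApp t us)
  show ?case
  proof (cases "M = Var k")
    case False
    then show ?thesis
    proof (cases M)
      case (App P Q)
      with RApp.prems obtain s ts where "s \<in> Taylor P" "set_mset ts \<subseteq> Taylor N" "rsub k ts s t"
        using RApp.IH(1) by force
      moreover have "\<forall>u\<in>#us. \<exists>s ts. s \<in> Taylor Q \<and> set_mset ts \<subseteq> Taylor N \<and> rsub k ts s u"
        using RApp.prems RApp.IH(2) App by auto
      then obtain ss ts' where
        "set_mset ss \<subseteq> Taylor Q" "set_mset ts' \<subseteq> Taylor N" "rsubs k ts' ss us"
        using rsubs_of_elements by blast
      ultimately show ?thesis using App
        by (intro exI[of _ "RApp s ss"] exI[of _ "ts + ts'"]) (auto intro: rsub_app)
    qed (use RApp.prems False in auto)
  qed (use RApp.prems in \<open>blast intro: Taylor_subst_VarD\<close>)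
qed

lemma Taylor_subst:
  "Taylor (subst k N M) = {t. \<exists>s ts. s \<in> Taylor M \<and> set_mset ts \<subseteq> Taylor N \<and> rsub k ts s t}"
  using Taylor_substI(1) Taylor_substD by blast

subsection \<open>Finiteness of resource substitution\<close>

lemma rsubs_elements:
  "rsubs k ts us us' \<Longrightarrow> size us' = size us \<and>
    (\<forall>u'\<in>#us'. \<exists>u\<in>#us. \<exists>ts'. set_mset ts' \<subseteq> set_mset ts \<and> rsub k ts' u u')"
proof (induction rule: rsub_rsubs.inducts(2)[where ?P1.0 = "\<lambda>_ _ _ _. True"])
  case (rsubs_add k ts0 u u' ts1 us us')
  have "\<exists>w\<in>#add_mset u us. \<exists>ts'. set_mset ts' \<subseteq> set_mset (ts0 + ts1) \<and> rsub k ts' w v"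
    if "v \<in># add_mset u' us'" for v
  proof (cases "v = u'")
    case True
    then show ?thesis using rsubs_add.hyps(1) by (intro bexI[of _ u] exI[of _ ts0]) auto
  next
    case False
    with that rsubs_add.IH obtain w ts' where "w \<in># us" "set_mset ts' \<subseteq> set_mset ts1" "rsub k ts' w v"
      by auto
    then show ?thesis by (intro bexI[of _ w] exI[of _ ts']) auto
  qed
  then show ?case using rsubs_add.IH by simp
qed simp_all

inductive_cases rsub_RVarE: "rsub k ts (RVar i) s'"
inductive_cases rsub_RLamE: "rsub k ts (RLam s) s'"
inductive_cases rsub_RAppE: "rsub k ts (RApp s us) s'"

text \<open>Quantifying over all bags drawn from a finite set lets the induction follow the
  splitting of the bag among the subterms.\<close>
lemma finite_rsub: "finite A \<Longrightarrow> finite {s'. \<exists>ts. set_mset ts \<subseteq> A \<and> rsub k ts s s'}"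
proof (induction s arbitrary: k)
  case (RVar i)
  have "{s'. \<exists>ts. set_mset ts \<subseteq> A \<and> rsub k ts (RVar i) s'} \<subseteq>
      insert (RVar (if k < i then i - 1 else i)) (((\<lambda>u. rlift u 0) ^^ k) ` A)"
    by (auto elim: rsub_RVarE)
  then show ?case using RVar.prems finite_subset by blast
next
  case (RLam s)
  have "{s'. \<exists>ts. set_mset ts \<subseteq> A \<and> rsub k ts (RLam s) s'} \<subseteq>
      RLam ` {s'. \<exists>ts. set_mset ts \<subseteq> A \<and> rsub (Suc k) ts s s'}"
    by (blast elim: rsub_RLamE)
  then show ?case using RLam finite_subset by blast
next
  case (RApp s us)
  define B where "B = {s'. \<exists>ts. set_mset ts \<subseteq> A \<and> rsub k ts s s'}"
  define C where "C = (\<Union>u\<in>set_mset us. {u'. \<exists>ts. set_mset ts \<subseteq> A \<and> rsub k ts u u'})"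
  have "{s'. \<exists>ts. set_mset ts \<subseteq> A \<and> rsub k ts (RApp s us) s'} \<subseteq>
      case_prod RApp ` (B \<times> multisets_of_size C (size us))"
  proof clarify
    fix ts s'' assume A: "set_mset ts \<subseteq> A" and "rsub k ts (RApp s us) s''"
    then obtain ts0 ts1 s' us' where "ts = ts0 + ts1" "s'' = RApp s' us'"
      and s': "rsub k ts0 s s'" and us': "rsubs k ts1 us us'"
      by (cases rule: rsub_RAppE)
    moreover have "s' \<in> B"
      using A s' \<open>ts = ts0 + ts1\<close> unfolding B_def by auto
    moreover have "us' \<in> multisets_of_size C (size us)"
    proof -
      have "set_mset ts1 \<subseteq> A" using A \<open>ts = ts0 + ts1\<close> by auto
      then have "set_mset us' \<subseteq> C"
        using rsubs_elements[OF us'] unfolding C_def by blast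
      then show ?thesis using rsubs_elements[OF us'] by (simp add: multisets_of_size_def)
    qed
    ultimately show "s'' \<in> case_prod RApp ` (B \<times> multisets_of_size C (size us))"
      by auto
  qed
  moreover have "finite B" and "finite C"
    unfolding B_def C_def using RApp by auto
  ultimately show ?case using finite_subset by blast
qed

lemma finite_rsubst: "finite (rsubst s ts)"
proof -
  have "rsubst s ts \<subseteq> {s'. \<exists>ts'. set_mset ts' \<subseteq> set_mset ts \<and> rsub 0 ts' s s'}"
    by (auto simp: rsubst_def)
  then show ?thesis using finite_rsub[of "set_mset ts" 0 s] finite_subset by blast
qed

lemma finite_rred:
  shows "rred s S \<Longrightarrow> finite S"
    and "rredm ts TS \<Longrightarrow> finite TS"
  by (induction rule: rred_rredm.inducts) (auto simp: finite_rsubst)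

subsection \<open>Reduction of finite sums\<close>

lemma multisets_of_size_Suc:
  "multisets_of_size A (Suc n) = (\<Union>ts\<in>multisets_of_size A n. (\<lambda>v. add_mset v ts) ` A)"
proof (intro equalityI subsetI)
  fix M assume M: "M \<in> multisets_of_size A (Suc n)"
  then obtain v ts where "M = add_mset v ts"
    by (auto simp: multisets_of_size_def dest: size_eq_Suc_imp_eq_union)
  with M show "M \<in> (\<Union>ts\<in>multisets_of_size A n. (\<lambda>v. add_mset v ts) ` A)"
    by (auto simp: multisets_of_size_def)
qed (auto simp: multisets_of_size_def)

definition rred_context :: "(rtrm \<Rightarrow> rtrm) \<Rightarrow> bool" where
  "rred_context C \<longleftrightarrow> (\<forall>s S. rred s S \<longrightarrow> rred (C s) (C ` S))"

lemma rred_context_RLam: "rred_context RLam"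
  by (auto simp: rred_context_def intro: rred_lam)

lemma rred_context_RApp_fun: "rred_context (\<lambda>s. RApp s ts)"
  by (auto simp: rred_context_def intro: rred_fun)

lemma rred_context_RApp_arg: "rred_context (\<lambda>v. RApp s (add_mset v ts))"
  unfolding rred_context_def
proof (intro allI impI)
  fix u U assume "rred u U"
  then have "rred (RApp s (add_mset u ts)) (RApp s ` (\<lambda>u'. add_mset u' ts) ` U)"
    by (intro rred_arg rredm_elem)
  then show "rred (RApp s (add_mset u ts)) ((\<lambda>v. RApp s (add_mset v ts)) ` U)"
    by (simp add: image_image)
qed

lemma sred_finite: "sred A B \<Longrightarrow> finite B"
proof -
  assume "sred A B"
  then obtain s0 T0 ps where "rred s0 T0" and ps: "\<forall>(s, T)\<in>set ps. rred s T \<or> T = {s}"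
    and "B = T0 \<union> \<Union>(snd ` set ps)"
    unfolding sred_def by blast
  moreover have "finite T" if "(s, T) \<in> set ps" for s T
    using ps that finite_rred(1) by fastforce
  ultimately show ?thesis by (auto simp: finite_rred)
qed

lemma sred_star_finite: "sred_star A B \<Longrightarrow> finite A \<Longrightarrow> finite B"
  by (induction rule: rtranclp_induct) (auto simp: sred_finite)

lemma rred_sred_star: "rred s S \<Longrightarrow> sred_star {s} S"
  unfolding sred_def by (intro r_into_rtranclp exI[of _ s] exI[of _ S] exI[of _ "[]"]) auto

lemma sred_image:
  assumes C: "rred_context C" and "sred A B"
  shows "sred (C ` A) (C ` B)"
proof -
  obtain s0 T0 ps where "rred s0 T0" and ps: "\<forall>(s, T)\<in>set ps. rred s T \<or> T = {s}"
    and A: "A = insert s0 (fst ` set ps)" and B: "B = T0 \<union> \<Union>(snd ` set ps)"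
    using \<open>sred A B\<close> unfolding sred_def by blast
  define ps' where "ps' = map (\<lambda>(s, T). (C s, C ` T)) ps"
  have "rred (C s0) (C ` T0)" using C \<open>rred s0 T0\<close> by (simp add: rred_context_def)
  moreover have "\<forall>(s, T)\<in>set ps'. rred s T \<or> T = {s}"
    using C ps unfolding ps'_def rred_context_def by auto
  moreover have "C ` A = insert (C s0) (fst ` set ps')"
    unfolding A ps'_def by force
  moreover have "C ` B = C ` T0 \<union> \<Union>(snd ` set ps')"
    unfolding B ps'_def by force
  ultimately show ?thesis unfolding sred_def by blast
qed

lemma sred_star_image:
  assumes "rred_context C" and "sred_star A B"
  shows "sred_star (C ` A) (C ` B)"
  using assms(2)
proof (induction rule: rtranclp_induct)
  case (step B B')
  then show ?case using sred_image[OF assms(1)] by (simp add: rtranclp.rtrancl_into_rtrancl)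
qed simp

text \<open>Listing a term twice in \<open>sred\<close> reduces it and keeps it, so \<open>C\<close> may meet \<open>A\<close>.\<close>
lemma sred_union:
  assumes "sred A B" and "finite C"
  shows "sred (A \<union> C) (B \<union> C)"
proof -
  obtain s0 T0 ps where "rred s0 T0" and ps: "\<forall>(s, T)\<in>set ps. rred s T \<or> T = {s}"
    and A: "A = insert s0 (fst ` set ps)" and B: "B = T0 \<union> \<Union>(snd ` set ps)"
    using \<open>sred A B\<close> unfolding sred_def by blast
  obtain cs where cs: "set cs = C" using \<open>finite C\<close> finite_list by blast
  define ps' where "ps' = ps @ map (\<lambda>c. (c, {c})) cs"
  have "\<forall>(s, T)\<in>set ps'. rred s T \<or> T = {s}" using ps unfolding ps'_def by auto
  moreover have "A \<union> C = insert s0 (fst ` set ps')" unfolding A ps'_def cs[symmetric] by force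
  moreover have "B \<union> C = T0 \<union> \<Union>(snd ` set ps')" unfolding B ps'_def cs[symmetric] by force
  ultimately show ?thesis unfolding sred_def using \<open>rred s0 T0\<close> by blast
qed

lemma sred_star_union:
  assumes "sred_star A B" and "finite C"
  shows "sred_star (A \<union> C) (B \<union> C)"
  using assms(1)
proof (induction rule: rtranclp_induct)
  case (step B B')
  then show ?case using sred_union[OF _ assms(2)] by (simp add: rtranclp.rtrancl_into_rtrancl)
qed simp

lemma sred_star_UN:
  assumes "finite I" and "\<And>i. i \<in> I \<Longrightarrow> sred_star {f i} (G i)"
  shows "sred_star (f ` I) (\<Union>i\<in>I. G i)"
  using assms
proof (induction rule: finite_induct)
  case (insert i I)
  have "sred_star ({f i} \<union> f ` I) (G i \<union> f ` I)"
    using insert by (intro sred_star_union) auto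
  moreover have "sred_star (f ` I \<union> G i) ((\<Union>i\<in>I. G i) \<union> G i)"
    using insert sred_star_finite by (intro sred_star_union) auto
  ultimately show ?case by (simp add: Un_commute)
qed simp

subsection \<open>Simulation of \<beta>-reduction on Taylor supports\<close>

lemma sred_tilde_iff:
  "sred_tilde A B \<longleftrightarrow>
    (\<forall>s\<in>A. \<exists>S. sred_star {s} S \<and> S \<subseteq> B) \<and>
    (\<forall>t\<in>B. \<exists>s\<in>A. \<exists>S. sred_star {s} S \<and> S \<subseteq> B \<and> t \<in> S)"
    (is "_ \<longleftrightarrow> ?covers A B")
proof
  assume "sred_tilde A B"
  then obtain I where A: "A = fst ` I" and B: "B = \<Union>(snd ` I)"
    and I: "\<forall>(s, S)\<in>I. sred_star {s} S"
    unfolding sred_tilde_def by blast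
  have "(s, S) \<in> I \<Longrightarrow> s \<in> A \<and> sred_star {s} S \<and> S \<subseteq> B" for s S
    using A B I by force
  moreover have "\<exists>S. (s, S) \<in> I" if "s \<in> A" for s
    using A that by force
  moreover have "\<exists>s S. (s, S) \<in> I \<and> t \<in> S" if "t \<in> B" for t
    using B that by force
  ultimately show "?covers A B" by meson
next
  assume covers: "?covers A B"
  define I where "I = {(s, S). s \<in> A \<and> sred_star {s} S \<and> S \<subseteq> B}"
  have "A = fst ` I"
  proof (intro equalityI subsetI)
    fix s assume "s \<in> A"
    with covers obtain S where "(s, S) \<in> I" unfolding I_def by blast
    then show "s \<in> fst ` I" by (simp add: rev_image_eqI)
  qed (auto simp: I_def)
  moreover have "B = \<Union>(snd ` I)"
  proof (intro equalityI subsetI)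
    fix t assume "t \<in> B"
    with covers obtain s S where "(s, S) \<in> I" "t \<in> S" unfolding I_def by blast
    then show "t \<in> \<Union>(snd ` I)" by force
  qed (auto simp: I_def)
  moreover have "\<forall>(s, S)\<in>I. finite S \<and> sred_star {s} S"
    unfolding I_def using sred_star_finite by auto
  ultimately show "sred_tilde A B" unfolding sred_tilde_def by blast
qed

lemma sred_tilde_refl: "sred_tilde A A"
  unfolding sred_tilde_def by (intro exI[of _ "(\<lambda>s. (s, {s})) ` A"]) (auto simp: image_image)

lemma sred_tilde_trans [trans]:
  assumes "sred_tilde A B" and "sred_tilde B C"
  shows "sred_tilde A C"
proof -
  have "\<forall>y\<in>B. \<exists>S. sred_star {y} S \<and> S \<subseteq> C"
    using assms(2) unfolding sred_tilde_iff by blast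
  then obtain f where f: "\<forall>y\<in>B. sred_star {y} (f y) \<and> f y \<subseteq> C"
    by (auto dest!: bchoice)
  have extend: "sred_star {s} (\<Union>(g ` S)) \<and> \<Union>(g ` S) \<subseteq> C"
    if "sred_star {s} S" and g: "\<forall>y\<in>S. sred_star {y} (g y) \<and> g y \<subseteq> C" for s S g
  proof -
    have "sred_star S (\<Union>(g ` S))"
      using sred_star_UN[of S id g] sred_star_finite[OF that(1)] g by simp
    then show ?thesis using that by auto
  qed
  have "\<exists>S. sred_star {s} S \<and> S \<subseteq> C" if "s \<in> A" for s
  proof -
    obtain S where "sred_star {s} S" "S \<subseteq> B"
      using assms(1) \<open>s \<in> A\<close> unfolding sred_tilde_iff by blast
    then show ?thesis using extend[of s S f] f by blast
  qed
  moreover have "\<exists>s\<in>A. \<exists>S. sred_star {s} S \<and> S \<subseteq> C \<and> t \<in> S" if "t \<in> C" for t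
  proof -
    obtain y Y where y: "y \<in> B" "sred_star {y} Y" "Y \<subseteq> C" "t \<in> Y"
      using assms(2) \<open>t \<in> C\<close> unfolding sred_tilde_iff by blast
    then obtain s S where "s \<in> A" "sred_star {s} S" "S \<subseteq> B" "y \<in> S"
      using assms(1) unfolding sred_tilde_iff by blast
    define g where "g = f(y := Y)"
    have "\<forall>z\<in>S. sred_star {z} (g z) \<and> g z \<subseteq> C"
      using f y \<open>S \<subseteq> B\<close> unfolding g_def by auto
    then have "sred_star {s} (\<Union>(g ` S)) \<and> \<Union>(g ` S) \<subseteq> C"
      using extend \<open>sred_star {s} S\<close> by blast
    moreover have "t \<in> \<Union>(g ` S)" using \<open>y \<in> S\<close> \<open>t \<in> Y\<close> unfolding g_def by force
    ultimately show ?thesis using \<open>s \<in> A\<close> by blast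
  qed
  ultimately show ?thesis unfolding sred_tilde_iff by blast
qed

lemma sred_tilde_UN:
  assumes "\<And>i. i \<in> I \<Longrightarrow> sred_tilde (A i) (B i)"
  shows "sred_tilde (\<Union>i\<in>I. A i) (\<Union>i\<in>I. B i)"
proof -
  obtain J where J: "\<forall>i\<in>I. A i = fst ` J i \<and> B i = \<Union>(snd ` J i) \<and>
      (\<forall>(s, S)\<in>J i. finite S \<and> sred_star {s} S)"
    using assms unfolding sred_tilde_def by metis
  then show ?thesis unfolding sred_tilde_def
    by (intro exI[of _ "\<Union>i\<in>I. J i"]) (auto simp: image_UN)
qed

lemma sred_tilde_image:
  assumes "rred_context C" and "sred_tilde A B"
  shows "sred_tilde (C ` A) (C ` B)"
proof -
  obtain I where A: "A = fst ` I" and B: "B = \<Union>(snd ` I)"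
    and I: "\<forall>(s, S)\<in>I. finite S \<and> sred_star {s} S"
    using assms(2) unfolding sred_tilde_def by blast
  define I' where "I' = (\<lambda>(s, S). (C s, C ` S)) ` I"
  have "C ` A = fst ` I'" unfolding A I'_def by force
  moreover have "C ` B = \<Union>(snd ` I')" unfolding B I'_def by force
  moreover have "\<forall>(s, S)\<in>I'. finite S \<and> sred_star {s} S"
    using I sred_star_image[OF assms(1), of "{_}"] unfolding I'_def by auto
  ultimately show ?thesis unfolding sred_tilde_def by blast
qed

lemma sred_tilde_multisets_of_size:
  assumes "sred_tilde A B" and "\<And>ts. rred_context (\<lambda>v. f (add_mset v ts))"
  shows "sred_tilde (f ` multisets_of_size A n) (f ` multisets_of_size B n)"
  using assms(2)
proof (induction n arbitrary: f)
  case 0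
  show ?case by (simp add: sred_tilde_refl)
next
  case (Suc n)
  have "f ` multisets_of_size A (Suc n) = (\<Union>ts\<in>multisets_of_size A n. (\<lambda>v. f (add_mset v ts)) ` A)"
    by (auto simp: multisets_of_size_Suc)
  also have "sred_tilde \<dots> (\<Union>ts\<in>multisets_of_size A n. (\<lambda>v. f (add_mset v ts)) ` B)"
    using Suc.prems assms(1) by (intro sred_tilde_UN sred_tilde_image)
  also have "\<dots> = (\<Union>v\<in>B. (\<lambda>ts. f (add_mset v ts)) ` multisets_of_size A n)"
    by auto
  also have "sred_tilde \<dots> (\<Union>v\<in>B. (\<lambda>ts. f (add_mset v ts)) ` multisets_of_size B n)"
    using Suc.prems by (intro sred_tilde_UN Suc.IH) (subst add_mset_commute)
  also have "\<dots> = f ` multisets_of_size B (Suc n)"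
    by (auto simp: multisets_of_size_Suc)
  finally show ?case .
qed

lemma sred_tilde_Taylor_Lam:
  "sred_tilde (Taylor M) (Taylor M') \<Longrightarrow> sred_tilde (Taylor (Lam M)) (Taylor (Lam M'))"
  by (simp add: sred_tilde_image rred_context_RLam)

lemma sred_tilde_Taylor_App_fun:
  assumes "sred_tilde (Taylor M) (Taylor M')"
  shows "sred_tilde (Taylor (App M N)) (Taylor (App M' N))"
proof -
  have "Taylor (App P N) = (\<Union>ts\<in>{ts. set_mset ts \<subseteq> Taylor N}. (\<lambda>s. RApp s ts) ` Taylor P)" for P
    by auto
  then show ?thesis
    using assms by (simp only:) (intro sred_tilde_UN sred_tilde_image rred_context_RApp_fun)
qed

lemma sred_tilde_Taylor_App_arg:
  assumes "sred_tilde (Taylor N) (Taylor N')"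
  shows "sred_tilde (Taylor (App M N)) (Taylor (App M N'))"
proof -
  have "Taylor (App M P) = (\<Union>s\<in>Taylor M. \<Union>n. RApp s ` multisets_of_size (Taylor P) n)" for P
    by (auto simp: multisets_of_size_def)
  then show ?thesis using assms
    by (simp only:) (intro sred_tilde_UN sred_tilde_multisets_of_size rred_context_RApp_arg)
qed

lemma sred_tilde_Taylor_redex: "sred_tilde (Taylor (App (Lam M) N)) (Taylor (subst 0 N M))"
proof -
  define R where
    "R = (\<lambda>(s, ts). (RApp (RLam s) ts, rsubst s ts)) ` (Taylor M \<times> {ts. set_mset ts \<subseteq> Taylor N})"
  have "Taylor (App (Lam M) N) = fst ` R"
    unfolding R_def by (auto simp: image_image intro: rev_image_eqI[of "(_, _)"])
  moreover have "Taylor (subst 0 N M) = \<Union>(snd ` R)"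
    unfolding R_def Taylor_subst rsubst_def by (auto simp: image_image) blast+
  moreover have "\<forall>(s, S)\<in>R. finite S \<and> sred_star {s} S"
    unfolding R_def by (auto simp: finite_rsubst intro: rred_sred_star rred_redex)
  ultimately show ?thesis unfolding sred_tilde_def by blast
qed

lemma beta_sred_tilde_Taylor: "beta M N \<Longrightarrow> sred_tilde (Taylor M) (Taylor N)"
proof (induction rule: beta.induct)
  case (beta_redex M N)
  show ?case by (rule sred_tilde_Taylor_redex)
next
  case (beta_lam M M')
  from beta_lam.IH show ?case by (rule sred_tilde_Taylor_Lam)
next
  case (beta_fun M M' N)
  from beta_fun.IH show ?case by (rule sred_tilde_Taylor_App_fun)
next
  case (beta_arg N N' M)
  from beta_arg.IH show ?case by (rule sred_tilde_Taylor_App_arg)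
qed

theorem mainTheorem5:
  assumes "lam001 M" and "lam001 N" and "beta\<^sup>*\<^sup>* M N"
  shows "sred_tilde (Taylor M) (Taylor N)"
  using assms(3)
  by (induction rule: rtranclp_induct) (auto intro: sred_tilde_refl sred_tilde_trans beta_sred_tilde_Taylor)

end
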